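(* Let $d\ge2$, $p\ge1$, $k\ge1$. For each integer $m\ge1$, the function $$J_m(T):=N_{\ge m(p-1)+1}(T)\prod_{i=1}^{m-1}N_{\le i(p-1)}(T),\qquad T\in\mathcal{C}_k^{(d)},$$ lies in $\mathrm{span}\{\mathbf{1}_{\mathcal{S}}:\mathcal{S}\text{ a length-}p\text{ shuffle class in }\mathcal{C}_k^{(d)}\}$.
   Context: A $d$-Catalan tree is a rooted planar tree in which each vertex has $0$ or $d$ children; $\mathcal{C}_k^{(d)}$ is the set of those with $k$ internal vertices. $N_j(T)$ is the number of vertices at distance $j$ from the root, $N_{\le q}(T)=\sum_{0\le j\le q}N_j(T)$, $N_{\ge q}(T)=\sum_{j\ge q}N_j(T)$. For a path $(v_0,\dots,v_p)$ ($v_i$ a child of $v_{i-1}$) in $T$, $\mathrm{Sh}(T;v_0,\dots,v_p)$ is the set of trees obtained from $T$ by rearranging the $(d-1)p$ subtrees subtended by the siblings of $v_1,\dots,v_p$ among those positions; such sets are the length-$p$ shuffle classes. *)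

theory Defs
  imports Complex_Main "HOL-Library.Indicator_Function"
begin

text \<open>A rooted planar tree is represented by its set of vertices, each vertex being the
  list of child indices on the path from the root (the root is the empty list).
  The children of vertex v are the vertices v @ [j]; the distance from the root is the
  length of the list.\<close>

definition is_dcat :: "nat \<Rightarrow> nat list set \<Rightarrow> bool" where
  "is_dcat d V \<longleftrightarrow> finite V \<and> [] \<in> V \<and>
     (\<forall>v w. v @ w \<in> V \<longrightarrow> v \<in> V) \<and>
     (\<forall>v\<in>V. (\<forall>j. v @ [j] \<notin> V) \<or> (\<forall>j. v @ [j] \<in> V \<longleftrightarrow> j < d))"

definition internal_vertices :: "nat list set \<Rightarrow> nat list set" where
  "internal_vertices V = {v \<in> V. \<exists>j. v @ [j] \<in> V}"

definition catalan_trees :: "nat \<Rightarrow> nat \<Rightarrow> nat list set set" where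
  "catalan_trees d k = {V. is_dcat d V \<and> card (internal_vertices V) = k}"

definition N_le :: "nat list set \<Rightarrow> nat \<Rightarrow> nat" where
  "N_le V q = card {v \<in> V. length v \<le> q}"

definition N_ge :: "nat list set \<Rightarrow> nat \<Rightarrow> nat" where
  "N_ge V q = card {v \<in> V. q \<le> length v}"

text \<open>Path v_0 = u, v_i = u @ take i cs (i = 0..p), p = length cs.
  The slots are the positions of the siblings of v_1, ..., v_p.\<close>

definition slots :: "nat \<Rightarrow> nat list \<Rightarrow> nat list \<Rightarrow> nat list set" where
  "slots d u cs = {u @ take i cs @ [j] | i j. i < length cs \<and> j < d \<and> j \<noteq> cs ! i}"

definition subtree_at :: "nat list set \<Rightarrow> nat list \<Rightarrow> nat list set" where
  "subtree_at V s = {w. s @ w \<in> V}"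

definition shuffle_class :: "nat \<Rightarrow> nat list set \<Rightarrow> nat list \<Rightarrow> nat list \<Rightarrow> nat list set set" where
  "shuffle_class d V u cs =
     {{x \<in> V. \<not> (\<exists>s\<in>slots d u cs. \<exists>w. x = s @ w)} \<union>
      {s @ w | s w. s \<in> slots d u cs \<and> w \<in> subtree_at V (\<sigma> s)}
      | \<sigma>. bij_betw \<sigma> (slots d u cs) (slots d u cs)}"

definition shuffle_classes :: "nat \<Rightarrow> nat \<Rightarrow> nat \<Rightarrow> nat list set set set" where
  "shuffle_classes d k p =
     {shuffle_class d V u cs | V u cs. V \<in> catalan_trees d k \<and> u \<in> V \<and>
        length cs = p \<and> u @ cs \<in> V}"

definition J_fun :: "nat \<Rightarrow> nat \<Rightarrow> nat list set \<Rightarrow> real" where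
  "J_fun p m V = real (N_ge V (m * (p - 1) + 1)) * (\<Prod>i=1..m-1. real (N_le V (i * (p - 1))))"

end

theory Submission
  imports Defs
begin

text \<open>Put L = (m - 1)(p - 1), so that m(p - 1) + 1 = L + p. Every vertex at depth at least
  L + p is the endpoint of a unique path of length p starting at depth at least L, hence
  J_m(T) is the sum over such paths of [the path lies in T] times the product of the
  N_{\<le> i(p-1)}(T). A shuffle along a path starting at depth at least L rearranges only
  vertices below depth L, so it keeps the path and every factor N_{\<le> i(p-1)}. Thus each
  summand is constant on the shuffle classes of its path, which partition the trees
  containing that path, and is therefore a combination of their indicators.\<close>

definition in_indicator_span :: "'a set set \<Rightarrow> 'a set \<Rightarrow> ('a \<Rightarrow> real) \<Rightarrow> bool" where
  "in_indicator_span \<C> D f \<longleftrightarrow>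
     (\<exists>Ss c. finite Ss \<and> Ss \<subseteq> \<C> \<and> (\<forall>T\<in>D. f T = (\<Sum>S\<in>Ss. c S * indicator S T)))"

lemma in_indicator_span_cong:
  assumes "in_indicator_span \<C> D f" and "\<And>T. T \<in> D \<Longrightarrow> f T = g T"
  shows "in_indicator_span \<C> D g"
  using assms unfolding in_indicator_span_def by metis

lemma in_indicator_span_zero: "in_indicator_span \<C> D (\<lambda>_. 0)"
  unfolding in_indicator_span_def by (rule exI[of _ "{}"]) simp

lemma in_indicator_span_add:
  assumes "in_indicator_span \<C> D f" and "in_indicator_span \<C> D g"
  shows "in_indicator_span \<C> D (\<lambda>T. f T + g T)"
proof -
  obtain Sf cf where Sf: "finite Sf" "Sf \<subseteq> \<C>" and f: "\<forall>T\<in>D. f T = (\<Sum>S\<in>Sf. cf S * indicator S T)"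
    using assms(1) unfolding in_indicator_span_def by blast
  obtain Sg cg where Sg: "finite Sg" "Sg \<subseteq> \<C>" and g: "\<forall>T\<in>D. g T = (\<Sum>S\<in>Sg. cg S * indicator S T)"
    using assms(2) unfolding in_indicator_span_def by blast
  define c where "c S = (if S \<in> Sf then cf S else 0) + (if S \<in> Sg then cg S else 0)" for S
  have "f T + g T = (\<Sum>S\<in>Sf \<union> Sg. c S * indicator S T)" if "T \<in> D" for T
  proof -
    have "(\<Sum>S\<in>Sf \<union> Sg. c S * indicator S T) =
        (\<Sum>S\<in>Sf \<union> Sg. if S \<in> Sf then cf S * indicator S T else 0) +
        (\<Sum>S\<in>Sf \<union> Sg. if S \<in> Sg then cg S * indicator S T else 0)"
      unfolding c_def sum.distrib[symmetric] by (rule sum.cong) (auto simp: distrib_right)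
    also have "\<dots> = (\<Sum>S\<in>Sf. cf S * indicator S T) + (\<Sum>S\<in>Sg. cg S * indicator S T)"
      using Sf(1) Sg(1) by (simp add: sum.inter_restrict[symmetric] Int_absorb1 Int_absorb2)
    finally show ?thesis using f g that by simp
  qed
  then show ?thesis
    unfolding in_indicator_span_def using Sf Sg by (metis finite_UnI le_sup_iff)
qed

lemma in_indicator_span_sum:
  assumes "finite I" and "\<And>i. i \<in> I \<Longrightarrow> in_indicator_span \<C> D (f i)"
  shows "in_indicator_span \<C> D (\<lambda>T. \<Sum>i\<in>I. f i T)"
  using assms
  by (induction I rule: finite_induct) (simp_all add: in_indicator_span_zero in_indicator_span_add)

lemma in_indicator_span_blockwise:
  fixes cls :: "'a \<Rightarrow> 'a set"
  assumes "finite P" and "cls ` P \<subseteq> \<C>"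
    and self: "\<And>T. T \<in> P \<Longrightarrow> T \<in> cls T"
    and closed: "\<And>T T'. T' \<in> P \<Longrightarrow> T \<in> D \<Longrightarrow> T \<in> cls T' \<Longrightarrow> T \<in> P \<and> cls T = cls T'"
    and const: "\<And>T T'. T' \<in> P \<Longrightarrow> T \<in> D \<Longrightarrow> T \<in> cls T' \<Longrightarrow> f T = f T'"
  shows "in_indicator_span \<C> D (\<lambda>T. if T \<in> P then f T else 0)"
proof -
  define c where "c S = f (SOME T'. T' \<in> P \<and> cls T' = S)" for S
  have "(if T \<in> P then f T else 0) = (\<Sum>S\<in>cls ` P. c S * indicator S T)" if "T \<in> D" for T
  proof (cases "T \<in> P")
    case True
    define R where "R = (SOME T'. T' \<in> P \<and> cls T' = cls T)"
    have R: "R \<in> P \<and> cls R = cls T"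
      unfolding R_def using True by (metis (mono_tags, lifting) someI)
    then have "f T = f R" using const self[OF True] that by simp
    have "cls ` P \<inter> {S. T \<in> S} = {cls T}" using self closed True that by blast
    then have "(\<Sum>S\<in>cls ` P. c S * indicator S T) = c (cls T)"
      using assms(1) by (simp add: indicator_def sum.inter_filter[symmetric] if_distrib[of "\<lambda>x. _ * x"])
    then show ?thesis using True \<open>f T = f R\<close> by (simp add: c_def R_def)
  next
    case False
    then have "T \<notin> S" if "S \<in> cls ` P" for S using closed that \<open>T \<in> D\<close> by blast
    then show ?thesis using False by simp
  qed
  then show ?thesis unfolding in_indicator_span_def using assms(1,2) by blast
qed

lemma take_append_eq_take_Cons_nth:
  assumes "take i' cs @ x = take i cs @ j # w" and "i < i'" and "i' \<le> length cs"
  shows "j = cs ! i"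
proof -
  have "(take i' cs @ x) ! i = cs ! i" using assms(2,3) by (simp add: nth_append)
  moreover have "(take i cs @ j # w) ! i = j" using assms(2,3) by (simp add: nth_append)
  ultimately show ?thesis using assms(1) by simp
qed

lemma slots_append_eq:
  assumes "s \<in> slots d u cs" and "s' \<in> slots d u cs" and "s @ w = s' @ w'"
  shows "s = s' \<and> w = w'"
proof -
  obtain i j where s: "s = u @ take i cs @ [j]" "i < length cs" "j \<noteq> cs ! i"
    using assms(1) by (auto simp: slots_def)
  obtain i' j' where s': "s' = u @ take i' cs @ [j']" "i' < length cs" "j' \<noteq> cs ! i'"
    using assms(2) by (auto simp: slots_def)
  have eq: "take i cs @ j # w = take i' cs @ j' # w'" using assms(3) s s' by simp
  have "i = i'"
  proof (rule ccontr)
    assume "i \<noteq> i'"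
    then consider "i < i'" | "i' < i" by linarith
    then show False
    proof cases
      case 1
      then show False using take_append_eq_take_Cons_nth[OF eq[symmetric]] s s' by simp
    next
      case 2
      then show False using take_append_eq_take_Cons_nth[OF eq] s s' by simp
    qed
  qed
  then show ?thesis using eq s s' by simp
qed

lemma path_not_below_slot:
  assumes "s \<in> slots d u cs"
  shows "u @ cs \<noteq> s @ w"
proof
  assume eq: "u @ cs = s @ w"
  obtain i j where s: "s = u @ take i cs @ [j]" "i < length cs" "j \<noteq> cs ! i"
    using assms by (auto simp: slots_def)
  have "take (length cs) cs @ [] = take i cs @ j # w" using eq s by simp
  then show False using take_append_eq_take_Cons_nth[of "length cs" cs "[]" i j w] s by simp
qed

definition reshuffle ::
    "nat \<Rightarrow> nat list set \<Rightarrow> nat list \<Rightarrow> nat list \<Rightarrow> (nat list \<Rightarrow> nat list) \<Rightarrow> nat list set" where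
  "reshuffle d V u cs \<sigma> = {x \<in> V. \<not> (\<exists>s\<in>slots d u cs. \<exists>w. x = s @ w)} \<union>
      {s @ w | s w. s \<in> slots d u cs \<and> w \<in> subtree_at V (\<sigma> s)}"

lemma shuffle_class_conv_reshuffle:
  "shuffle_class d V u cs = {reshuffle d V u cs \<sigma> | \<sigma>. bij_betw \<sigma> (slots d u cs) (slots d u cs)}"
  by (simp add: shuffle_class_def reshuffle_def)

lemma reshuffle_id: "reshuffle d V u cs id = V"
  unfolding reshuffle_def subtree_at_def by auto

lemma reshuffle_cong:
  assumes "\<And>s. s \<in> slots d u cs \<Longrightarrow> \<sigma> s = \<tau> s"
  shows "reshuffle d V u cs \<sigma> = reshuffle d V u cs \<tau>"
  unfolding reshuffle_def using assms by (simp cong: conj_cong)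

lemma subtree_at_reshuffle:
  assumes "s \<in> slots d u cs"
  shows "subtree_at (reshuffle d V u cs \<sigma>) s = subtree_at V (\<sigma> s)"
proof (rule set_eqI)
  fix w
  have "s @ w \<in> reshuffle d V u cs \<sigma> \<longleftrightarrow> w \<in> subtree_at V (\<sigma> s)"
  proof
    assume "s @ w \<in> reshuffle d V u cs \<sigma>"
    then obtain s' w' where "s' \<in> slots d u cs" "w' \<in> subtree_at V (\<sigma> s')" "s @ w = s' @ w'"
      using assms unfolding reshuffle_def by blast
    then show "w \<in> subtree_at V (\<sigma> s)" using slots_append_eq[OF assms] by blast
  qed (use assms in \<open>auto simp: reshuffle_def\<close>)
  then show "w \<in> subtree_at (reshuffle d V u cs \<sigma>) s \<longleftrightarrow> w \<in> subtree_at V (\<sigma> s)"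
    by (simp add: subtree_at_def)
qed

lemma reshuffle_reshuffle:
  assumes "\<tau> ` slots d u cs \<subseteq> slots d u cs"
  shows "reshuffle d (reshuffle d V u cs \<sigma>) u cs \<tau> = reshuffle d V u cs (\<sigma> \<circ> \<tau>)"
proof -
  let ?W = "reshuffle d V u cs \<sigma>" and ?S = "slots d u cs"
  have outside: "{x \<in> ?W. \<not> (\<exists>s\<in>?S. \<exists>w. x = s @ w)} = {x \<in> V. \<not> (\<exists>s\<in>?S. \<exists>w. x = s @ w)}"
    unfolding reshuffle_def by blast
  have "subtree_at ?W (\<tau> s) = subtree_at V ((\<sigma> \<circ> \<tau>) s)" if "s \<in> ?S" for s
    using subtree_at_reshuffle assms that by auto
  then have inside: "{s @ w | s w. s \<in> ?S \<and> w \<in> subtree_at ?W (\<tau> s)} =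
      {s @ w | s w. s \<in> ?S \<and> w \<in> subtree_at V ((\<sigma> \<circ> \<tau>) s)}"
    by (simp cong: conj_cong)
  show ?thesis unfolding reshuffle_def[of d ?W] outside inside by (simp add: reshuffle_def)
qed

lemma shuffle_class_self: "V \<in> shuffle_class d V u cs"
  unfolding shuffle_class_conv_reshuffle by (intro CollectI exI[of _ id]) (simp add: reshuffle_id)

lemma shuffle_class_trans:
  assumes "T \<in> shuffle_class d V u cs" and "X \<in> shuffle_class d T u cs"
  shows "X \<in> shuffle_class d V u cs"
proof -
  obtain \<sigma> where \<sigma>: "bij_betw \<sigma> (slots d u cs) (slots d u cs)" and T: "T = reshuffle d V u cs \<sigma>"
    using assms(1) unfolding shuffle_class_conv_reshuffle by blast
  obtain \<tau> where \<tau>: "bij_betw \<tau> (slots d u cs) (slots d u cs)" and X: "X = reshuffle d T u cs \<tau>"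
    using assms(2) unfolding shuffle_class_conv_reshuffle by blast
  have "X = reshuffle d V u cs (\<sigma> \<circ> \<tau>)"
    unfolding X T using \<tau> by (simp add: reshuffle_reshuffle bij_betw_def)
  moreover have "bij_betw (\<sigma> \<circ> \<tau>) (slots d u cs) (slots d u cs)"
    using \<tau> \<sigma> by (rule bij_betw_trans)
  ultimately show ?thesis unfolding shuffle_class_conv_reshuffle by blast
qed

lemma shuffle_class_sym:
  assumes "T \<in> shuffle_class d V u cs"
  shows "V \<in> shuffle_class d T u cs"
proof -
  let ?S = "slots d u cs"
  obtain \<sigma> where \<sigma>: "bij_betw \<sigma> ?S ?S" and T: "T = reshuffle d V u cs \<sigma>"
    using assms unfolding shuffle_class_conv_reshuffle by blast
  define \<tau> where "\<tau> = inv_into ?S \<sigma>"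
  have \<tau>: "bij_betw \<tau> ?S ?S" unfolding \<tau>_def using \<sigma> by (rule bij_betw_inv_into)
  have "reshuffle d T u cs \<tau> = reshuffle d V u cs (\<sigma> \<circ> \<tau>)"
    unfolding T using \<tau> by (simp add: reshuffle_reshuffle bij_betw_def)
  also have "\<dots> = reshuffle d V u cs id"
    using \<sigma> by (intro reshuffle_cong) (simp add: \<tau>_def bij_betw_inv_into_right)
  finally have "V = reshuffle d T u cs \<tau>" by (simp add: reshuffle_id)
  then show ?thesis using \<tau> unfolding shuffle_class_conv_reshuffle by blast
qed

lemma shuffle_class_eq:
  assumes "T \<in> shuffle_class d V u cs"
  shows "shuffle_class d T u cs = shuffle_class d V u cs"
  using assms shuffle_class_trans shuffle_class_sym by blast

lemma path_in_shuffle_class: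
  assumes "u @ cs \<in> V" and "T \<in> shuffle_class d V u cs"
  shows "u @ cs \<in> T"
proof -
  obtain \<sigma> where "T = reshuffle d V u cs \<sigma>"
    using assms(2) unfolding shuffle_class_conv_reshuffle by blast
  then show ?thesis unfolding reshuffle_def using assms(1) path_not_below_slot by blast
qed

lemma N_le_shuffle_class:
  assumes "q \<le> length u" and "T \<in> shuffle_class d V u cs"
  shows "N_le T q = N_le V q"
proof -
  obtain \<sigma> where T: "T = reshuffle d V u cs \<sigma>"
    using assms(2) unfolding shuffle_class_conv_reshuffle by blast
  have "\<not> length (s @ w) \<le> q" if "s \<in> slots d u cs" for s w
    using that assms(1) by (auto simp: slots_def)
  then have "{v \<in> T. length v \<le> q} = {v \<in> V. length v \<le> q}"
    unfolding T reshuffle_def by blast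
  then show ?thesis by (simp add: N_le_def)
qed

lemma dcat_vertex_bounds:
  assumes "is_dcat d V" and "v \<in> V"
  shows "length v \<le> card (internal_vertices V)" and "set v \<subseteq> {..<d}"
proof -
  have prefix_closed: "\<And>a b. a @ b \<in> V \<Longrightarrow> a \<in> V"
    and children: "\<And>a. a \<in> V \<Longrightarrow> (\<forall>j. a @ [j] \<notin> V) \<or> (\<forall>j. a @ [j] \<in> V \<longleftrightarrow> j < d)"
    using assms(1) unfolding is_dcat_def by blast+
  have child: "take i v @ [v ! i] \<in> V" if "i < length v" for i
    by (metis append_take_drop_id prefix_closed take_Suc_conv_app_nth that assms(2))
  then have prefix: "take i v \<in> V" if "i < length v" for i
    using that prefix_closed by blast
  have "(\<lambda>i. take i v) ` {..<length v} \<subseteq> internal_vertices V"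
    unfolding internal_vertices_def using child prefix by blast
  moreover have "inj_on (\<lambda>i. take i v) {..<length v}"
    by (rule inj_onI) (metis length_take lessThan_iff min.absorb4)
  moreover have "finite (internal_vertices V)"
    using assms(1) unfolding is_dcat_def internal_vertices_def by simp
  ultimately show "length v \<le> card (internal_vertices V)"
    by (metis card_image card_lessThan card_mono)
  have "v ! i < d" if "i < length v" for i
    using children[OF prefix[OF that]] child[OF that] by blast
  then show "set v \<subseteq> {..<d}" by (auto simp: in_set_conv_nth)
qed

lemma catalan_trees_subset_lists:
  assumes "T \<in> catalan_trees d k"
  shows "T \<subseteq> {v. set v \<subseteq> {..<d} \<and> length v \<le> k}"
  using assms dcat_vertex_bounds unfolding catalan_trees_def by blast

lemma finite_bounded_lists: "finite {v :: nat list. set v \<subseteq> {..<d} \<and> length v \<le> k}"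
  by (rule finite_lists_length_le) simp

lemma finite_catalan_trees: "finite (catalan_trees d k)"
  by (rule finite_subset[OF _ finite_Pow_iff[THEN iffD2, OF finite_bounded_lists]])
    (use catalan_trees_subset_lists in blast)

lemma path_indicator_in_shuffle_span:
  assumes "length cs = p"
    and invariant: "\<And>V T. V \<in> catalan_trees d k \<Longrightarrow> u @ cs \<in> V \<Longrightarrow> T \<in> catalan_trees d k \<Longrightarrow>
        T \<in> shuffle_class d V u cs \<Longrightarrow> f T = f V"
  shows "in_indicator_span (shuffle_classes d k p) (catalan_trees d k)
           (\<lambda>T. if u @ cs \<in> T then f T else 0)"
proof -
  define P where "P = {T \<in> catalan_trees d k. u @ cs \<in> T}"
  have "in_indicator_span (shuffle_classes d k p) (catalan_trees d k) (\<lambda>T. if T \<in> P then f T else 0)"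
  proof (rule in_indicator_span_blockwise[where cls = "\<lambda>T. shuffle_class d T u cs"])
    show "finite P" unfolding P_def using finite_catalan_trees by simp
    have "u \<in> T" if "T \<in> P" for T
      using that unfolding P_def catalan_trees_def is_dcat_def by blast
    then show "(\<lambda>T. shuffle_class d T u cs) ` P \<subseteq> shuffle_classes d k p"
      unfolding shuffle_classes_def P_def using assms(1) by blast
  qed (auto simp: P_def shuffle_class_self shuffle_class_eq path_in_shuffle_class invariant)
  then show ?thesis by (rule in_indicator_span_cong) (simp add: P_def)
qed

lemma N_ge_eq_sum:
  assumes "finite W" and "T \<subseteq> W"
  shows "real (N_ge T q) = (\<Sum>v\<in>{v \<in> W. q \<le> length v}. if v \<in> T then 1 else 0)"
proof -
  have "{v \<in> {v \<in> W. q \<le> length v}. v \<in> T} = {v \<in> T. q \<le> length v}" using assms(2) by blast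
  then show ?thesis
    using assms(1) by (simp add: N_ge_def sum.inter_filter[symmetric])
qed

lemma N_ge_times_in_shuffle_span:
  assumes invariant: "\<And>u cs V T. L \<le> length u \<Longrightarrow> length cs = p \<Longrightarrow>
      T \<in> shuffle_class d V u cs \<Longrightarrow> f T = f V"
  shows "in_indicator_span (shuffle_classes d k p) (catalan_trees d k)
           (\<lambda>T. real (N_ge T (L + p)) * f T)"
proof -
  define W where "W = {v \<in> {v. set v \<subseteq> {..<d} \<and> length v \<le> k}. L + p \<le> length v}"
  have "finite W" unfolding W_def using finite_bounded_lists by (rule finite_subset[rotated]) blast
  have "in_indicator_span (shuffle_classes d k p) (catalan_trees d k)
          (\<lambda>T. if take (length v - p) v @ drop (length v - p) v \<in> T then f T else 0)"
    if "v \<in> W" for v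
    using that by (intro path_indicator_in_shuffle_span invariant) (auto simp: W_def)
  then have "in_indicator_span (shuffle_classes d k p) (catalan_trees d k)
      (\<lambda>T. \<Sum>v\<in>W. if v \<in> T then f T else 0)"
    using \<open>finite W\<close> by (intro in_indicator_span_sum) auto
  moreover have "(\<Sum>v\<in>W. if v \<in> T then f T else 0) = real (N_ge T (L + p)) * f T"
    if "T \<in> catalan_trees d k" for T
    unfolding W_def N_ge_eq_sum[OF finite_bounded_lists catalan_trees_subset_lists[OF that]]
      sum_distrib_right by (rule sum.cong) auto
  ultimately show ?thesis by (rule in_indicator_span_cong)
qed

theorem corollary6p3:
  fixes d p k m :: nat
  assumes "d \<ge> 2" and "p \<ge> 1" and "k \<ge> 1" and "m \<ge> 1"
  shows "\<exists>Ss c. finite Ss \<and> Ss \<subseteq> shuffle_classes d k p \<and>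
           (\<forall>T \<in> catalan_trees d k.
              J_fun p m T = (\<Sum>S\<in>Ss. c S * indicator S T))"
proof -
  define L where "L = (m - 1) * (p - 1)"
  have Lp: "m * (p - 1) + 1 = L + p" using assms(2,4) unfolding L_def by (cases m; cases p) auto
  have "in_indicator_span (shuffle_classes d k p) (catalan_trees d k)
     (\<lambda>T. real (N_ge T (L + p)) * (\<Prod>i=1..m-1. real (N_le T (i * (p - 1)))))"
  proof (rule N_ge_times_in_shuffle_span)
    fix u cs V T
    assume "L \<le> length u" and T: "T \<in> shuffle_class d V u cs"
    have "N_le T (i * (p - 1)) = N_le V (i * (p - 1))" if "i \<in> {1..m-1}" for i
    proof (rule N_le_shuffle_class[OF _ T])
      have "i * (p - 1) \<le> L" unfolding L_def using that by (simp add: mult_le_mono1)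
      then show "i * (p - 1) \<le> length u" using \<open>L \<le> length u\<close> by linarith
    qed
    then show "(\<Prod>i=1..m-1. real (N_le T (i * (p - 1)))) =
        (\<Prod>i=1..m-1. real (N_le V (i * (p - 1))))"
      by (intro prod.cong) auto
  qed
  then show ?thesis unfolding in_indicator_span_def J_fun_def Lp .
qed

end
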